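(* Let $(\mathcal{X},d)$ be a finite metric space with at least two points, let $\mu,\nu\in\mathcal{M}_+(\mathcal{X})$, $p\ge 1$ and $C>0$. Fix a resolution $q>1$ and a depth $L\in\mathbb{N}$, and let $Q_0,\dots,Q_{L+1}$, the tree $\mathcal{T}$, the descendant sets $\mathcal{C}(\cdot)$ and the height function $h_{q,L}(k)=\frac{q^{1-k}-q^{-L}}{q-1}\mathrm{diam}(\mathcal{X})$ be as in the context. For $l\in\{1,\dots,L+1\}$ set $$B_{q,p,L,\mathcal{X}}(l)=2^{p-1}\sum_{j=l}^{L+1}\sum_{x\in Q_j}\big(h_{q,L}(j-1)^p-h_{q,L}(j)^p\big)\,\big|\mu^L(\mathcal{C}(x,j))-\nu^L(\mathcal{C}(x,j))\big|.$$ Then: (i) if $C\ge 2h_{q,L}(0)$, then $\mathrm{KR}^p_{p,C}(\mu,\nu)\le \big(\tfrac{C^p}{2}-2^{p-1}h_{q,L}(0)^p\big)|\mathbb{M}(\mu)-\mathbb{M}(\nu)|+B_{q,p,L,\mathcal{X}}(1)$; (ii) if $2h_{q,L}(l)\le C<2h_{q,L}(l-1)$ for some $l\in\{1,\dots,L\}$, then $\mathrm{KR}^p_{p,C}(\mu,\nu)\le B_{q,p,L,\mathcal{X}}(l)$; (iii) if $C\le \max\{2h_{q,L}(L),\ \min_{x\neq x'}d(x,x')\}$, then $\mathrm{KR}^p_{p,C}(\mu,\nu)\le \frac{C^p}{2}\mathrm{TV}(\mu,\nu)$, where $\mathrm{TV}(\mu,\nu)=\sum_{x\in\mathcal{X}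}|\mu(x)-\nu(x)|$.
   Context: $\mathcal{M}_+(\mathcal{X})$ is the set of non-negative measures on the finite set $\mathcal{X}$ (identified with vectors $(\mu(x))_{x\in\mathcal{X}}$), $\mathbb{M}(\mu)=\sum_x\mu(x)$ its total mass. For $\pi\in\mathcal{M}_+(\mathcal{X}\times\mathcal{X})$, marginals are $\pi(x,\mathcal{X})=\sum_{x'}\pi(x,x')$, $\pi(\mathcal{X},x')=\sum_x\pi(x,x')$. The set of sub-couplings is $\Pi_{\le}(\mu,\nu)=\{\pi\in\mathcal{M}_+(\mathcal{X}\times\mathcal{X}):\pi(x,\mathcal{X})\le\mu(x),\ \pi(\mathcal{X},x')\le\nu(x')\ \forall x,x'\}$. For $p\ge1$, $C>0$ the $(p,C)$-Kantorovich–Rubinstein distance is $$\mathrm{KR}_{p,C}(\mu,\nu)=\Big(\min_{\pi\in\Pi_\le(\mu,\nu)}\sum_{x,x'}d^p(x,x')\pi(x,x')+C^p\Big(\tfrac{\mathbb{M}(\mu)+\mathbb{M}(\nu)}{2}-\mathbb{M}(\pi)\Big)\Big)^{1/p}.$$ Tree construction: for $\epsilon>0$, an $\epsilon$-cover of $\mathcal{X}$ is a subset $S\subset\mathcal{X}$ such that every $x\in\mathcal{X}$ has $d(x,y)\le\epsilon$ for some $y\in S$. For $j=0,\dots,L$ let $Q_j\subset\mathcal{X}$ be a $q^{-j}\mathrm{diam}(\mathcal{X})$-cover of minimal cardinality (so $|Q_0|=1$), and $Q_{L+1}=\mathcal{X}$. The nodes of $\mathcal{T}$ are the pairs $(x,j)$,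 $x\in Q_j$, $j=0,\dots,L+1$; the root is the unique node of level $0$. Each node $(x',j+1)$ is joined by an edge to exactly one node $(x,j)$ with $d(x,x')\le q^{-j}\mathrm{diam}(\mathcal{X})$ (its parent; ties broken arbitrarily). A node at level $k$ has height $h_{q,L}(k)$, so leaves (level $L+1$, identified with the points of $\mathcal{X}$) have height $0$. For a node $v$, $\mathcal{C}(v)$ denotes the set of nodes whose path to the root passes through $v$ (including $v$). The measure $\mu^L$ is $\mu$ viewed as a measure on the leaves, so $\mu^L(\mathcal{C}(v))$ is the total $\mu$-mass of the points $x\in\mathcal{X}$ whose leaf $(x,L+1)$ descends from $v$; similarly $\nu^L$. *)

theory Defs
  imports Complex_Main
begin

definition finite_metric :: "'a set \<Rightarrow> ('a \<Rightarrow> 'a \<Rightarrow> real) \<Rightarrow> bool" where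
  "finite_metric X d \<longleftrightarrow> finite X \<and>
     (\<forall>x\<in>X. \<forall>y\<in>X. d x y \<ge> 0 \<and> (d x y = 0 \<longleftrightarrow> x = y) \<and> d x y = d y x) \<and>
     (\<forall>x\<in>X. \<forall>y\<in>X. \<forall>z\<in>X. d x z \<le> d x y + d y z)"

definition diam :: "'a set \<Rightarrow> ('a \<Rightarrow> 'a \<Rightarrow> real) \<Rightarrow> real" where
  "diam X d = Max {d x y | x y. x \<in> X \<and> y \<in> X}"

definition min_sep :: "'a set \<Rightarrow> ('a \<Rightarrow> 'a \<Rightarrow> real) \<Rightarrow> real" where
  "min_sep X d = Min {d x y | x y. x \<in> X \<and> y \<in> X \<and> x \<noteq> y}"

definition nonneg_measure :: "'a set \<Rightarrow> ('a \<Rightarrow> real) \<Rightarrow> bool" where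
  "nonneg_measure X \<mu> \<longleftrightarrow> (\<forall>x\<in>X. \<mu> x \<ge> 0)"

definition mass :: "'a set \<Rightarrow> ('a \<Rightarrow> real) \<Rightarrow> real" where
  "mass X \<mu> = (\<Sum>x\<in>X. \<mu> x)"

definition sub_coupling :: "'a set \<Rightarrow> ('a \<Rightarrow> real) \<Rightarrow> ('a \<Rightarrow> real) \<Rightarrow> ('a \<Rightarrow> 'a \<Rightarrow> real) \<Rightarrow> bool" where
  "sub_coupling X \<mu> \<nu> \<pi> \<longleftrightarrow>
     (\<forall>x\<in>X. \<forall>x'\<in>X. \<pi> x x' \<ge> 0) \<and>
     (\<forall>x\<in>X. (\<Sum>x'\<in>X. \<pi> x x') \<le> \<mu> x) \<and>
     (\<forall>x'\<in>X. (\<Sum>x\<in>X. \<pi> x x') \<le> \<nu> x')"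

definition KR_cost :: "'a set \<Rightarrow> ('a \<Rightarrow> 'a \<Rightarrow> real) \<Rightarrow> real \<Rightarrow> real \<Rightarrow>
    ('a \<Rightarrow> real) \<Rightarrow> ('a \<Rightarrow> real) \<Rightarrow> ('a \<Rightarrow> 'a \<Rightarrow> real) \<Rightarrow> real" where
  "KR_cost X d p C \<mu> \<nu> \<pi> =
     (\<Sum>x\<in>X. \<Sum>x'\<in>X. (d x x') powr p * \<pi> x x')
     + C powr p * ((mass X \<mu> + mass X \<nu>) / 2 - (\<Sum>x\<in>X. \<Sum>x'\<in>X. \<pi> x x'))"

text \<open>The (p,C)-Kantorovich--Rubinstein distance (the minimum is attained; we write it as Inf).\<close>
definition KR :: "'a set \<Rightarrow> ('a \<Rightarrow> 'a \<Rightarrow> real) \<Rightarrow> real \<Rightarrow> real \<Rightarrow>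
    ('a \<Rightarrow> real) \<Rightarrow> ('a \<Rightarrow> real) \<Rightarrow> real" where
  "KR X d p C \<mu> \<nu> = (Inf {KR_cost X d p C \<mu> \<nu> \<pi> | \<pi>. sub_coupling X \<mu> \<nu> \<pi>}) powr (1 / p)"

definition TV :: "'a set \<Rightarrow> ('a \<Rightarrow> real) \<Rightarrow> ('a \<Rightarrow> real) \<Rightarrow> real" where
  "TV X \<mu> \<nu> = (\<Sum>x\<in>X. \<bar>\<mu> x - \<nu> x\<bar>)"

definition is_cover :: "'a set \<Rightarrow> ('a \<Rightarrow> 'a \<Rightarrow> real) \<Rightarrow> real \<Rightarrow> 'a set \<Rightarrow> bool" where
  "is_cover X d \<epsilon> S \<longleftrightarrow> S \<subseteq> X \<and> (\<forall>x\<in>X. \<exists>y\<in>S. d x y \<le> \<epsilon>)"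

definition min_cover :: "'a set \<Rightarrow> ('a \<Rightarrow> 'a \<Rightarrow> real) \<Rightarrow> real \<Rightarrow> 'a set \<Rightarrow> bool" where
  "min_cover X d \<epsilon> S \<longleftrightarrow> is_cover X d \<epsilon> S \<and> (\<forall>S'. is_cover X d \<epsilon> S' \<longrightarrow> card S \<le> card S')"

text \<open>Tree construction: Q j is the set of centres at level j (j = 0..L+1), and
  par j x' is the (centre of the) parent at level j of the node (x', j+1).\<close>
definition valid_tree :: "'a set \<Rightarrow> ('a \<Rightarrow> 'a \<Rightarrow> real) \<Rightarrow> real \<Rightarrow> nat \<Rightarrow>
    (nat \<Rightarrow> 'a set) \<Rightarrow> (nat \<Rightarrow> 'a \<Rightarrow> 'a) \<Rightarrow> bool" where
  "valid_tree X d q L Q par \<longleftrightarrow>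
     (\<forall>j\<le>L. min_cover X d (q powr (- real j) * diam X d) (Q j)) \<and>
     Q (L + 1) = X \<and>
     (\<forall>j\<le>L. \<forall>x'\<in>Q (j + 1). par j x' \<in> Q j \<and> d (par j x') x' \<le> q powr (- real j) * diam X d)"

text \<open>anc_aux L par y m: the centre of the ancestor at level L+1-m of the leaf (y, L+1).\<close>
fun anc_aux :: "nat \<Rightarrow> (nat \<Rightarrow> 'a \<Rightarrow> 'a) \<Rightarrow> 'a \<Rightarrow> nat \<Rightarrow> 'a" where
  "anc_aux L par y 0 = y"
| "anc_aux L par y (Suc m) = par (L - m) (anc_aux L par y m)"

definition anc :: "nat \<Rightarrow> (nat \<Rightarrow> 'a \<Rightarrow> 'a) \<Rightarrow> nat \<Rightarrow> 'a \<Rightarrow> 'a" where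
  "anc L par j y = anc_aux L par y (L + 1 - j)"

text \<open>\<mu>^L(C(x,j)): mass of the leaves descending from the node (x,j).\<close>
definition subtree_mass :: "'a set \<Rightarrow> nat \<Rightarrow> (nat \<Rightarrow> 'a \<Rightarrow> 'a) \<Rightarrow> ('a \<Rightarrow> real) \<Rightarrow> nat \<Rightarrow> 'a \<Rightarrow> real" where
  "subtree_mass X L par \<mu> j x = (\<Sum>y\<in>{y\<in>X. anc L par j y = x}. \<mu> y)"

definition height :: "'a set \<Rightarrow> ('a \<Rightarrow> 'a \<Rightarrow> real) \<Rightarrow> real \<Rightarrow> nat \<Rightarrow> nat \<Rightarrow> real" where
  "height X d q L k = (q powr (1 - real k) - q powr (- real L)) / (q - 1) * diam X d"

definition Bterm :: "'a set \<Rightarrow> ('a \<Rightarrow> 'a \<Rightarrow> real) \<Rightarrow> real \<Rightarrow> real \<Rightarrow> nat \<Rightarrow>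
    (nat \<Rightarrow> 'a set) \<Rightarrow> (nat \<Rightarrow> 'a \<Rightarrow> 'a) \<Rightarrow> ('a \<Rightarrow> real) \<Rightarrow> ('a \<Rightarrow> real) \<Rightarrow> nat \<Rightarrow> real" where
  "Bterm X d q p L Q par \<mu> \<nu> l = 2 powr (p - 1) *
     (\<Sum>j=l..L+1. \<Sum>x\<in>Q j.
        (height X d q L (j - 1) powr p - height X d q L j powr p) *
        \<bar>subtree_mass X L par \<mu> j x - subtree_mass X L par \<nu> j x\<bar>)"

end

theory Submission
  imports Defs
begin

text \<open>All bounds come from one explicit sub-coupling, built greedily from the leaves of the tree
  up to its root. At the leaves every point keeps min (mu x) (nu x) in place. Going from level
  j + 1 to level j, the mass still unmatched inside each level-j subtree is matched
  proportionally; points of such a subtree are within distance 2 h j of each other, and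
  afterwards only one of the two measures has unmatched mass left in the subtree, so the total
  unmatched mass is the sum of the subtree imbalances. Telescoping over the levels gives B. In
  case (ii) the greedy matching is stopped at level l, above which moving mass would cost more
  than the penalty C^p / 2 paid per unit of unmatched mass.\<close>

definition coupling_mass :: "'a set \<Rightarrow> ('a \<Rightarrow> 'a \<Rightarrow> real) \<Rightarrow> real" where
  "coupling_mass X \<pi> = (\<Sum>x\<in>X. \<Sum>y\<in>X. \<pi> x y)"

definition transport_cost :: "'a set \<Rightarrow> ('a \<Rightarrow> 'a \<Rightarrow> real) \<Rightarrow> real \<Rightarrow> ('a \<Rightarrow> 'a \<Rightarrow> real) \<Rightarrow> real" where
  "transport_cost X d p \<pi> = (\<Sum>x\<in>X. \<Sum>y\<in>X. d x y powr p * \<pi> x y)"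

definition unmatched_mass :: "'a set \<Rightarrow> ('a \<Rightarrow> real) \<Rightarrow> ('a \<Rightarrow> real) \<Rightarrow> ('a \<Rightarrow> 'a \<Rightarrow> real) \<Rightarrow> real" where
  "unmatched_mass X \<mu> \<nu> \<pi> = mass X \<mu> + mass X \<nu> - 2 * coupling_mass X \<pi>"

lemma KR_cost_eq:
  "KR_cost X d p C \<mu> \<nu> \<pi> = transport_cost X d p \<pi> + C powr p / 2 * unmatched_mass X \<mu> \<nu> \<pi>"
  unfolding KR_cost_def transport_cost_def unmatched_mass_def coupling_mass_def
  by (simp add: algebra_simps)

lemma coupling_mass_le_mass:
  assumes "sub_coupling X \<mu> \<nu> \<pi>"
  shows "coupling_mass X \<pi> \<le> mass X \<mu>" and "coupling_mass X \<pi> \<le> mass X \<nu>"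
proof -
  show "coupling_mass X \<pi> \<le> mass X \<mu>"
    using assms unfolding coupling_mass_def mass_def sub_coupling_def by (intro sum_mono) auto
  have "coupling_mass X \<pi> = (\<Sum>y\<in>X. \<Sum>x\<in>X. \<pi> x y)"
    unfolding coupling_mass_def by (rule sum.swap)
  also have "\<dots> \<le> mass X \<nu>"
    using assms unfolding mass_def sub_coupling_def by (intro sum_mono) auto
  finally show "coupling_mass X \<pi> \<le> mass X \<nu>" .
qed

lemma unmatched_mass_nonneg: "sub_coupling X \<mu> \<nu> \<pi> \<Longrightarrow> 0 \<le> unmatched_mass X \<mu> \<nu> \<pi>"
  using coupling_mass_le_mass unfolding unmatched_mass_def by fastforce

lemma KR_cost_nonneg:
  assumes "sub_coupling X \<mu> \<nu> \<pi>"
  shows "0 \<le> KR_cost X d p C \<mu> \<nu> \<pi>"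
proof -
  have "0 \<le> transport_cost X d p \<pi>"
    using assms unfolding transport_cost_def sub_coupling_def by (intro sum_nonneg) auto
  then show ?thesis
    unfolding KR_cost_eq using unmatched_mass_nonneg[OF assms] by simp
qed

lemma KR_powr_le_KR_cost:
  assumes "p \<noteq> 0" and "sub_coupling X \<mu> \<nu> \<pi>"
  shows "KR X d p C \<mu> \<nu> powr p \<le> KR_cost X d p C \<mu> \<nu> \<pi>"
proof -
  define S where "S = {KR_cost X d p C \<mu> \<nu> \<sigma> | \<sigma>. sub_coupling X \<mu> \<nu> \<sigma>}"
  have in_S: "KR_cost X d p C \<mu> \<nu> \<pi> \<in> S"
    unfolding S_def using assms(2) by auto
  have S_nonneg: "\<And>c. c \<in> S \<Longrightarrow> 0 \<le> c"
    unfolding S_def using KR_cost_nonneg by blast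
  then have "0 \<le> Inf S"
    using in_S by (intro cInf_greatest) auto
  then have "KR X d p C \<mu> \<nu> powr p = Inf S"
    unfolding KR_def S_def[symmetric] powr_powr using assms(1) by simp
  also have "\<dots> \<le> KR_cost X d p C \<mu> \<nu> \<pi>"
    using in_S S_nonneg by (intro cInf_lower bdd_belowI) auto
  finally show ?thesis .
qed

definition diagonal_coupling :: "('a \<Rightarrow> real) \<Rightarrow> ('a \<Rightarrow> real) \<Rightarrow> 'a \<Rightarrow> 'a \<Rightarrow> real" where
  "diagonal_coupling \<mu> \<nu> x y = (if x = y then min (\<mu> x) (\<nu> x) else 0)"

lemma diagonal_coupling_row_sum:
  "finite X \<Longrightarrow> x \<in> X \<Longrightarrow> (\<Sum>y\<in>X. diagonal_coupling \<mu> \<nu> x y) = min (\<mu> x) (\<nu> x)"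
  unfolding diagonal_coupling_def by simp

lemma diagonal_coupling_col_sum:
  "finite X \<Longrightarrow> y \<in> X \<Longrightarrow> (\<Sum>x\<in>X. diagonal_coupling \<mu> \<nu> x y) = min (\<mu> y) (\<nu> y)"
  unfolding diagonal_coupling_def by simp

lemma sub_coupling_diagonal:
  assumes "finite X" "nonneg_measure X \<mu>" "nonneg_measure X \<nu>"
  shows "sub_coupling X \<mu> \<nu> (diagonal_coupling \<mu> \<nu>)"
  using assms unfolding sub_coupling_def nonneg_measure_def
  by (auto simp: diagonal_coupling_row_sum diagonal_coupling_col_sum)
     (auto simp: diagonal_coupling_def)

lemma transport_cost_diagonal:
  assumes "\<forall>x\<in>X. d x x = 0"
  shows "transport_cost X d p (diagonal_coupling \<mu> \<nu>) = 0"
  unfolding transport_cost_def diagonal_coupling_def using assms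
  by (intro sum.neutral ballI) auto

lemma unmatched_mass_diagonal:
  assumes "finite X"
  shows "unmatched_mass X \<mu> \<nu> (diagonal_coupling \<mu> \<nu>) = TV X \<mu> \<nu>"
proof -
  have "unmatched_mass X \<mu> \<nu> (diagonal_coupling \<mu> \<nu>) =
      (\<Sum>x\<in>X. \<mu> x + \<nu> x - 2 * min (\<mu> x) (\<nu> x))"
    unfolding unmatched_mass_def coupling_mass_def mass_def using assms
    by (simp add: diagonal_coupling_row_sum sum_subtractf sum_distrib_left sum.distrib)
  also have "\<dots> = TV X \<mu> \<nu>"
    unfolding TV_def by (rule sum.cong) (auto simp: min_def)
  finally show ?thesis .
qed

lemma KR_powr_le_TV:
  assumes "finite X" "\<forall>x\<in>X. d x x = 0" "nonneg_measure X \<mu>" "nonneg_measure X \<nu>" "p \<noteq> 0"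
  shows "KR X d p C \<mu> \<nu> powr p \<le> C powr p / 2 * TV X \<mu> \<nu>"
proof -
  have "KR X d p C \<mu> \<nu> powr p \<le> KR_cost X d p C \<mu> \<nu> (diagonal_coupling \<mu> \<nu>)"
    using assms by (intro KR_powr_le_KR_cost sub_coupling_diagonal)
  also have "\<dots> = C powr p / 2 * TV X \<mu> \<nu>"
    unfolding KR_cost_eq using assms by (simp add: transport_cost_diagonal unmatched_mass_diagonal)
  finally show ?thesis .
qed

definition row_residual :: "'a set \<Rightarrow> ('a \<Rightarrow> real) \<Rightarrow> ('a \<Rightarrow> 'a \<Rightarrow> real) \<Rightarrow> 'a \<Rightarrow> real" where
  "row_residual X \<mu> \<pi> x = \<mu> x - (\<Sum>y\<in>X. \<pi> x y)"

definition col_residual :: "'a set \<Rightarrow> ('a \<Rightarrow> real) \<Rightarrow> ('a \<Rightarrow> 'a \<Rightarrow> real) \<Rightarrow> 'a \<Rightarrow> real" where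
  "col_residual X \<nu> \<pi> y = \<nu> y - (\<Sum>x\<in>X. \<pi> x y)"

definition block_sum :: "'a set \<Rightarrow> ('a \<Rightarrow> 'b) \<Rightarrow> ('a \<Rightarrow> real) \<Rightarrow> 'b \<Rightarrow> real" where
  "block_sum X g f z = (\<Sum>x\<in>{x\<in>X. g x = z}. f x)"

definition block_local :: "'a set \<Rightarrow> ('a \<Rightarrow> 'b) \<Rightarrow> ('a \<Rightarrow> 'a \<Rightarrow> real) \<Rightarrow> bool" where
  "block_local X g \<pi> \<longleftrightarrow> (\<forall>x\<in>X. \<forall>y\<in>X. \<pi> x y \<noteq> 0 \<longrightarrow> g x = g y)"

definition blocks_balanced ::
    "'a set \<Rightarrow> ('a \<Rightarrow> 'b) \<Rightarrow> ('a \<Rightarrow> real) \<Rightarrow> ('a \<Rightarrow> real) \<Rightarrow> ('a \<Rightarrow> 'a \<Rightarrow> real) \<Rightarrow> bool" where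
  "blocks_balanced X g \<mu> \<nu> \<pi> \<longleftrightarrow>
     (\<forall>z. block_sum X g (row_residual X \<mu> \<pi>) z = 0 \<or> block_sum X g (col_residual X \<nu> \<pi>) z = 0)"

lemma sub_coupling_iff_residuals:
  "sub_coupling X \<mu> \<nu> \<pi> \<longleftrightarrow> (\<forall>x\<in>X. \<forall>y\<in>X. 0 \<le> \<pi> x y) \<and>
     (\<forall>x\<in>X. 0 \<le> row_residual X \<mu> \<pi> x) \<and> (\<forall>y\<in>X. 0 \<le> col_residual X \<nu> \<pi> y)"
  unfolding sub_coupling_def row_residual_def col_residual_def by auto

lemma unmatched_mass_eq_residuals:
  "unmatched_mass X \<mu> \<nu> \<pi> = (\<Sum>x\<in>X. row_residual X \<mu> \<pi> x + col_residual X \<nu> \<pi> x)"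
proof -
  have "coupling_mass X \<pi> = (\<Sum>y\<in>X. \<Sum>x\<in>X. \<pi> x y)"
    unfolding coupling_mass_def by (rule sum.swap)
  then show ?thesis
    unfolding unmatched_mass_def row_residual_def col_residual_def mass_def
    by (simp add: sum.distrib sum_subtractf coupling_mass_def)
qed

lemma block_local_residual_diff:
  assumes "finite X" "block_local X g \<pi>"
  shows "block_sum X g (row_residual X \<mu> \<pi>) z - block_sum X g (col_residual X \<nu> \<pi>) z =
    block_sum X g \<mu> z - block_sum X g \<nu> z"
proof -
  define S where "S = {x\<in>X. g x = z}"
  have row: "(\<Sum>y\<in>X. \<pi> x y) = (\<Sum>y\<in>S. \<pi> x y)" if "x \<in> S" for x
    using that assms unfolding S_def block_local_def
    by (intro sum.mono_neutral_right) auto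
  have col: "(\<Sum>x\<in>X. \<pi> x y) = (\<Sum>x\<in>S. \<pi> x y)" if "y \<in> S" for y
    using that assms unfolding S_def block_local_def
    by (intro sum.mono_neutral_right) auto
  have "(\<Sum>x\<in>S. \<Sum>y\<in>X. \<pi> x y) = (\<Sum>y\<in>S. \<Sum>x\<in>X. \<pi> x y)"
    using row col sum.swap[of \<pi> S S] by simp
  then show ?thesis
    unfolding block_sum_def row_residual_def col_residual_def S_def[symmetric]
    by (simp add: sum_subtractf)
qed

lemma unmatched_mass_blocks:
  assumes "finite X" "finite Z" "g ` X \<subseteq> Z"
    and "sub_coupling X \<mu> \<nu> \<pi>" "block_local X g \<pi>" "blocks_balanced X g \<mu> \<nu> \<pi>"
  shows "unmatched_mass X \<mu> \<nu> \<pi> = (\<Sum>z\<in>Z. \<bar>block_sum X g \<mu> z - block_sum X g \<nu> z\<bar>)"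
proof -
  let ?r = "block_sum X g (row_residual X \<mu> \<pi>)" and ?c = "block_sum X g (col_residual X \<nu> \<pi>)"
  have "?r z + ?c z = \<bar>block_sum X g \<mu> z - block_sum X g \<nu> z\<bar>" for z
  proof -
    have "0 \<le> ?r z" "0 \<le> ?c z"
      using assms(4) unfolding sub_coupling_iff_residuals block_sum_def by (auto intro: sum_nonneg)
    moreover have "?r z = 0 \<or> ?c z = 0"
      using assms(6) unfolding blocks_balanced_def by blast
    ultimately show ?thesis
      using block_local_residual_diff[OF assms(1,5), of \<mu> z \<nu>] by auto
  qed
  moreover have "unmatched_mass X \<mu> \<nu> \<pi> = (\<Sum>z\<in>Z. ?r z + ?c z)"
    unfolding unmatched_mass_eq_residuals block_sum_def sum.distrib[symmetric]
    by (rule sum.group[OF assms(1-3), symmetric])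
  ultimately show ?thesis by simp
qed

text \<open>Inside every block the residual masses a and b are matched proportionally, scaled so
  that the smaller of the two block totals is used up.\<close>
definition block_plan ::
    "'a set \<Rightarrow> ('a \<Rightarrow> 'b) \<Rightarrow> ('a \<Rightarrow> real) \<Rightarrow> ('a \<Rightarrow> real) \<Rightarrow> 'a \<Rightarrow> 'a \<Rightarrow> real" where
  "block_plan X g a b x y =
     (if g x = g y then a x * b y / max (block_sum X g a (g x)) (block_sum X g b (g x)) else 0)"

lemma block_plan_row_sum:
  assumes "finite X"
  shows "(\<Sum>y\<in>X. block_plan X g a b x y) =
    a x * (block_sum X g b (g x) / max (block_sum X g a (g x)) (block_sum X g b (g x)))"
proof -
  let ?M = "max (block_sum X g a (g x)) (block_sum X g b (g x))"
  have "(\<Sum>y\<in>X. block_plan X g a b x y) = (\<Sum>y\<in>{y\<in>X. g y = g x}. a x * b y / ?M)"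
    unfolding block_plan_def sum.inter_filter[OF assms, symmetric] by (intro sum.cong) auto
  then show ?thesis
    unfolding block_sum_def by (simp add: sum_distrib_left sum_divide_distrib)
qed

lemma block_plan_col_sum:
  assumes "finite X"
  shows "(\<Sum>x\<in>X. block_plan X g a b x y) =
    b y * (block_sum X g a (g y) / max (block_sum X g a (g y)) (block_sum X g b (g y)))"
proof -
  let ?M = "max (block_sum X g a (g y)) (block_sum X g b (g y))"
  have "(\<Sum>x\<in>X. block_plan X g a b x y) = (\<Sum>x\<in>{x\<in>X. g x = g y}. b y * a x / ?M)"
    unfolding block_plan_def sum.inter_filter[OF assms, symmetric] by (intro sum.cong) auto
  then show ?thesis
    unfolding block_sum_def by (simp add: sum_distrib_left sum_divide_distrib)
qed

lemma divide_max_le_1: "0 \<le> (A::real) \<Longrightarrow> 0 \<le> B \<Longrightarrow> B / max A B \<le> 1"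
  by (cases "B = 0") (auto simp: max_def divide_le_eq_1)

lemma divide_max_complement:
  "0 \<le> (A::real) \<Longrightarrow> 0 \<le> B \<Longrightarrow> A * (1 - B / max A B) = 0 \<or> B * (1 - A / max A B) = 0"
  by (cases "A \<le> B"; cases "A = 0"; cases "B = 0") (auto simp: max_def)

lemma block_plan_residuals:
  assumes X: "finite X" and a: "\<forall>x\<in>X. 0 \<le> a x" and b: "\<forall>y\<in>X. 0 \<le> b y"
  shows "\<forall>x\<in>X. \<forall>y\<in>X. 0 \<le> block_plan X g a b x y"
    and "\<forall>x\<in>X. (\<Sum>y\<in>X. block_plan X g a b x y) \<le> a x"
    and "\<forall>y\<in>X. (\<Sum>x\<in>X. block_plan X g a b x y) \<le> b y"
    and "block_sum X g (\<lambda>x. a x - (\<Sum>y\<in>X. block_plan X g a b x y)) z = 0 \<or>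
         block_sum X g (\<lambda>y. b y - (\<Sum>x\<in>X. block_plan X g a b x y)) z = 0"
proof -
  define A where "A = block_sum X g a"
  define B where "B = block_sum X g b"
  have A: "0 \<le> A z" and B: "0 \<le> B z" for z
    using a b unfolding A_def B_def block_sum_def by (auto intro: sum_nonneg)
  have row: "(\<Sum>y\<in>X. block_plan X g a b x y) = a x * (B (g x) / max (A (g x)) (B (g x)))" for x
    unfolding A_def B_def by (rule block_plan_row_sum[OF X])
  have col: "(\<Sum>x\<in>X. block_plan X g a b x y) = b y * (A (g y) / max (A (g y)) (B (g y)))" for y
    unfolding A_def B_def by (rule block_plan_col_sum[OF X])
  show "\<forall>x\<in>X. \<forall>y\<in>X. 0 \<le> block_plan X g a b x y"
    using a b A B unfolding block_plan_def A_def B_def by (simp add: le_max_iff_disj)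
  show "\<forall>x\<in>X. (\<Sum>y\<in>X. block_plan X g a b x y) \<le> a x"
    using a divide_max_le_1[OF A B] unfolding row
    by (auto intro!: mult_left_le simp del: times_divide_eq_right)
  show "\<forall>y\<in>X. (\<Sum>x\<in>X. block_plan X g a b x y) \<le> b y"
    using b divide_max_le_1[OF B A] unfolding col
    by (auto intro!: mult_left_le simp: max.commute simp del: times_divide_eq_right)
  have "block_sum X g (\<lambda>x. a x - (\<Sum>y\<in>X. block_plan X g a b x y)) z =
      (\<Sum>x\<in>{x\<in>X. g x = z}. a x * (1 - B z / max (A z) (B z)))"
    unfolding row block_sum_def by (intro sum.cong) (auto simp: algebra_simps)
  also have "\<dots> = A z * (1 - B z / max (A z) (B z))"
    unfolding A_def block_sum_def by (rule sum_distrib_right[symmetric])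
  moreover have "block_sum X g (\<lambda>y. b y - (\<Sum>x\<in>X. block_plan X g a b x y)) z =
      (\<Sum>y\<in>{y\<in>X. g y = z}. b y * (1 - A z / max (A z) (B z)))"
    unfolding col block_sum_def by (intro sum.cong) (auto simp: algebra_simps)
  moreover have "\<dots> = B z * (1 - A z / max (A z) (B z))"
    unfolding B_def block_sum_def by (rule sum_distrib_right[symmetric])
  ultimately show "block_sum X g (\<lambda>x. a x - (\<Sum>y\<in>X. block_plan X g a b x y)) z = 0 \<or>
         block_sum X g (\<lambda>y. b y - (\<Sum>x\<in>X. block_plan X g a b x y)) z = 0"
    using divide_max_complement[OF A B] by simp
qed

lemma transport_cost_le_block_bound:
  assumes "block_local X g \<tau>" "\<forall>x\<in>X. \<forall>y\<in>X. 0 \<le> \<tau> x y" "\<forall>x\<in>X. \<forall>y\<in>X. 0 \<le> d x y"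
    and "\<forall>x\<in>X. \<forall>y\<in>X. g x = g y \<longrightarrow> d x y \<le> D" "0 \<le> p"
  shows "transport_cost X d p \<tau> \<le> D powr p * coupling_mass X \<tau>"
  unfolding transport_cost_def coupling_mass_def sum_distrib_left
proof (intro sum_mono)
  fix x y assume xy: "x \<in> X" "y \<in> X"
  show "d x y powr p * \<tau> x y \<le> D powr p * \<tau> x y"
  proof (cases "g x = g y")
    case True
    then have "d x y powr p \<le> D powr p"
      using xy assms(3-5) by (auto intro: powr_mono2)
    then show ?thesis
      using xy assms(2) by (auto intro: mult_right_mono)
  next
    case False
    then have "\<tau> x y = 0"
      using xy assms(1) unfolding block_local_def by blast
    then show ?thesis by simp
  qed
qed

lemma block_matching_step:
  assumes X: "finite X" and \<pi>: "sub_coupling X \<mu> \<nu> \<pi>" "block_local X g \<pi>"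
    and d_nonneg: "\<forall>x\<in>X. \<forall>y\<in>X. 0 \<le> d x y"
    and d_block: "\<forall>x\<in>X. \<forall>y\<in>X. g x = g y \<longrightarrow> d x y \<le> D" and p: "0 \<le> p"
  obtains \<pi>' where "sub_coupling X \<mu> \<nu> \<pi>'" "block_local X g \<pi>'" "blocks_balanced X g \<mu> \<nu> \<pi>'"
    and "transport_cost X d p \<pi>' + D powr p / 2 * unmatched_mass X \<mu> \<nu> \<pi>'
      \<le> transport_cost X d p \<pi> + D powr p / 2 * unmatched_mass X \<mu> \<nu> \<pi>"
proof
  define \<tau> where "\<tau> = block_plan X g (row_residual X \<mu> \<pi>) (col_residual X \<nu> \<pi>)"
  define \<pi>' where "\<pi>' x y = \<pi> x y + \<tau> x y" for x y
  have res: "\<forall>x\<in>X. 0 \<le> row_residual X \<mu> \<pi> x" "\<forall>y\<in>X. 0 \<le> col_residual X \<nu> \<pi> y"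
    and \<pi>_nonneg: "\<forall>x\<in>X. \<forall>y\<in>X. 0 \<le> \<pi> x y"
    using \<pi>(1) unfolding sub_coupling_iff_residuals by auto
  note plan = block_plan_residuals[OF X res, of g, folded \<tau>_def]
  have row': "row_residual X \<mu> \<pi>' x = row_residual X \<mu> \<pi> x - (\<Sum>y\<in>X. \<tau> x y)" for x
    unfolding row_residual_def \<pi>'_def sum.distrib by simp
  have col': "col_residual X \<nu> \<pi>' y = col_residual X \<nu> \<pi> y - (\<Sum>x\<in>X. \<tau> x y)" for y
    unfolding col_residual_def \<pi>'_def sum.distrib by simp
  show "sub_coupling X \<mu> \<nu> \<pi>'"
    unfolding sub_coupling_iff_residuals row' col' \<pi>'_def using plan(1-3) \<pi>_nonneg by auto
  have \<tau>_local: "block_local X g \<tau>"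
    unfolding block_local_def \<tau>_def block_plan_def by auto
  with \<pi>(2) show "block_local X g \<pi>'"
    unfolding block_local_def \<pi>'_def by fastforce
  show "blocks_balanced X g \<mu> \<nu> \<pi>'"
    unfolding blocks_balanced_def row' col' using plan(4) by blast
  have cost: "transport_cost X d p \<pi>' = transport_cost X d p \<pi> + transport_cost X d p \<tau>"
    unfolding transport_cost_def \<pi>'_def distrib_left sum.distrib ..
  have "unmatched_mass X \<mu> \<nu> \<pi>' = unmatched_mass X \<mu> \<nu> \<pi> - 2 * coupling_mass X \<tau>"
    unfolding unmatched_mass_def coupling_mass_def \<pi>'_def sum.distrib by simp
  then have unmatched: "D powr p / 2 * unmatched_mass X \<mu> \<nu> \<pi>' =
      D powr p / 2 * unmatched_mass X \<mu> \<nu> \<pi> - D powr p * coupling_mass X \<tau>"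
    by (simp only:) (simp add: algebra_simps)
  have "transport_cost X d p \<tau> \<le> D powr p * coupling_mass X \<tau>"
    using \<tau>_local plan(1) d_nonneg d_block p by (rule transport_cost_le_block_bound)
  then show "transport_cost X d p \<pi>' + D powr p / 2 * unmatched_mass X \<mu> \<nu> \<pi>'
      \<le> transport_cost X d p \<pi> + D powr p / 2 * unmatched_mass X \<mu> \<nu> \<pi>"
    unfolding cost unmatched by linarith
qed

lemma powr_double_half: "0 \<le> x \<Longrightarrow> (2 * x) powr p / 2 = 2 powr (p - 1) * (x::real) powr p"
  by (simp add: powr_mult powr_diff)

locale cover_tree =
  fixes X :: "'a set" and d :: "'a \<Rightarrow> 'a \<Rightarrow> real" and q :: real and L :: nat
    and Q :: "nat \<Rightarrow> 'a set" and par :: "nat \<Rightarrow> 'a \<Rightarrow> 'a"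
  assumes metric: "finite_metric X d" and nonempty: "X \<noteq> {}" and q_gt_1: "q > 1"
    and tree: "valid_tree X d q L Q par"
begin

abbreviation "h \<equiv> height X d q L"

lemma finite_X: "finite X"
  using metric unfolding finite_metric_def by simp

lemma dist_self: "x \<in> X \<Longrightarrow> d x x = 0"
  and dist_nonneg: "x \<in> X \<Longrightarrow> y \<in> X \<Longrightarrow> 0 \<le> d x y"
  and dist_commute: "x \<in> X \<Longrightarrow> y \<in> X \<Longrightarrow> d x y = d y x"
  and dist_triangle: "x \<in> X \<Longrightarrow> y \<in> X \<Longrightarrow> z \<in> X \<Longrightarrow> d x z \<le> d x y + d y z"
  using metric unfolding finite_metric_def by auto

lemma dist_le_diam: "x \<in> X \<Longrightarrow> y \<in> X \<Longrightarrow> d x y \<le> diam X d"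
proof -
  assume "x \<in> X" "y \<in> X"
  moreover have "{d x y | x y. x \<in> X \<and> y \<in> X} = (\<lambda>(x, y). d x y) ` (X \<times> X)"
    by auto
  ultimately show ?thesis
    unfolding diam_def using finite_X by (intro Max_ge) auto
qed

lemma diam_nonneg: "0 \<le> diam X d"
  using nonempty dist_le_diam dist_self by fastforce

lemma height_Suc: "h k = h (Suc k) + q powr (- real k) * diam X d"
proof -
  have "q powr (1 - real k) = q * q powr (- real k)"
    using powr_add[of q 1 "- real k"] q_gt_1 by simp
  then show ?thesis
    unfolding height_def using q_gt_1 by (simp add: field_simps)
qed

lemma height_leaves: "h (L + 1) = 0"
  unfolding height_def by simp

lemma height_nonneg: "k \<le> L + 1 \<Longrightarrow> 0 \<le> h k"
proof -
  assume "k \<le> L + 1"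
  then have "q powr (- real L) \<le> q powr (1 - real k)"
    using q_gt_1 by (intro powr_mono) auto
  then show ?thesis
    unfolding height_def using q_gt_1 diam_nonneg by simp
qed

lemma centres_subset: "j \<le> L + 1 \<Longrightarrow> Q j \<subseteq> X"
  using tree unfolding valid_tree_def min_cover_def is_cover_def
  by (cases "j = L + 1") auto

lemma root_singleton: "\<exists>r. Q 0 = {r}"
proof -
  have cover: "min_cover X d (diam X d) (Q 0)"
    using tree q_gt_1 unfolding valid_tree_def by fastforce
  obtain x0 where x0: "x0 \<in> X"
    using nonempty by auto
  then have "is_cover X d (diam X d) {x0}"
    unfolding is_cover_def using dist_le_diam by auto
  then have "card (Q 0) \<le> 1"
    using cover unfolding min_cover_def by fastforce
  moreover have "Q 0 \<noteq> {}" "finite (Q 0)"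
    using cover x0 finite_X finite_subset unfolding min_cover_def is_cover_def by blast+
  ultimately have "card (Q 0) = 1"
    by (simp add: Suc_leI antisym card_gt_0_iff)
  then show ?thesis
    by (rule card_1_singletonE) auto
qed

lemma anc_aux_in_centres:
  assumes "y \<in> X" "m \<le> L + 1"
  shows "anc_aux L par y m \<in> Q (L + 1 - m) \<and> d y (anc_aux L par y m) \<le> h (L + 1 - m)"
  using assms(2)
proof (induction m)
  case 0
  show ?case
    using tree assms(1) dist_self height_leaves unfolding valid_tree_def by simp
next
  case (Suc m)
  define z where "z = anc_aux L par y m"
  have m: "m \<le> L" and "L + 1 - m = Suc (L - m)" and level: "L + 1 - Suc m = L - m"
    using Suc.prems by auto
  then have z: "z \<in> Q (Suc (L - m))" "d y z \<le> h (Suc (L - m))"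
    using Suc unfolding z_def by auto
  have parent: "par (L - m) z \<in> Q (L - m)" "d (par (L - m) z) z \<le> q powr (- real (L - m)) * diam X d"
    using tree z(1) unfolding valid_tree_def by auto
  have "z \<in> X" "par (L - m) z \<in> X"
    using z(1) parent(1) centres_subset[of "Suc (L - m)"] centres_subset[of "L - m"] m by force+
  then have "d y (par (L - m) z) \<le> d y z + d (par (L - m) z) z"
    using dist_triangle[OF assms(1)] dist_commute by metis
  also have "\<dots> \<le> h (L - m)"
    using z(2) parent(2) height_Suc[of "L - m"] by simp
  finally show ?case
    using parent(1) unfolding level z_def by simp
qed

lemma anc_in_centres: "y \<in> X \<Longrightarrow> j \<le> L + 1 \<Longrightarrow> anc L par j y \<in> Q j"
  using anc_aux_in_centres[of y "L + 1 - j"] unfolding anc_def by simp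

lemma dist_anc: "y \<in> X \<Longrightarrow> j \<le> L + 1 \<Longrightarrow> d y (anc L par j y) \<le> h j"
  using anc_aux_in_centres[of y "L + 1 - j"] unfolding anc_def by simp

lemma anc_leaves: "anc L par (L + 1) y = y"
  unfolding anc_def by simp

lemma anc_parent: "j \<le> L \<Longrightarrow> anc L par j y = par j (anc L par (Suc j) y)"
  unfolding anc_def by (simp add: Suc_diff_le)

lemma dist_same_anc:
  assumes "x \<in> X" "y \<in> X" "j \<le> L + 1" "anc L par j x = anc L par j y"
  shows "d x y \<le> 2 * h j"
proof -
  have "anc L par j x \<in> X"
    using anc_in_centres centres_subset assms by blast
  then have "d x y \<le> d x (anc L par j x) + d y (anc L par j y)"
    using dist_triangle dist_commute assms by metis
  then show ?thesis
    using dist_anc[of x j] dist_anc[of y j] assms by linarith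
qed

end

locale tree_transport = cover_tree +
  fixes \<mu> \<nu> :: "'a \<Rightarrow> real" and p :: real
  assumes nonneg_\<mu>: "nonneg_measure X \<mu>" and nonneg_\<nu>: "nonneg_measure X \<nu>" and p_pos: "0 < p"
begin

abbreviation "B \<equiv> Bterm X d q p L Q par \<mu> \<nu>"

text \<open>Invariant of the greedy matching, run from the leaves up to the root. Mass unmatched inside
  a level-j subtree is later matched within distance 2 h j; each unit of transported mass removes
  two units of unmatched mass, hence the price (2 h j)^p / 2 = 2^(p-1) h j^p per unit of
  unmatched mass.\<close>
definition level_coupling :: "nat \<Rightarrow> ('a \<Rightarrow> 'a \<Rightarrow> real) \<Rightarrow> bool" where
  "level_coupling j \<pi> \<longleftrightarrow> sub_coupling X \<mu> \<nu> \<pi> \<and> block_local X (anc L par j) \<pi> \<and>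
     blocks_balanced X (anc L par j) \<mu> \<nu> \<pi> \<and>
     transport_cost X d p \<pi> + 2 powr (p - 1) * h j powr p * unmatched_mass X \<mu> \<nu> \<pi> \<le> B (j + 1)"

lemma unmatched_mass_level:
  assumes "level_coupling j \<pi>" "j \<le> L + 1"
  shows "unmatched_mass X \<mu> \<nu> \<pi> =
    (\<Sum>z\<in>Q j. \<bar>subtree_mass X L par \<mu> j z - subtree_mass X L par \<nu> j z\<bar>)"
proof -
  have "finite (Q j)"
    using centres_subset[OF assms(2)] finite_X finite_subset by blast
  then show ?thesis
    using assms anc_in_centres finite_X unfolding level_coupling_def subtree_mass_def
    by (subst unmatched_mass_blocks[of X "Q j" "anc L par j"]) (auto simp: block_sum_def)
qed

lemma Bterm_split_first:
  assumes "1 \<le> j" "j \<le> L + 1"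
  shows "B j = 2 powr (p - 1) * (h (j - 1) powr p - h j powr p) *
      (\<Sum>z\<in>Q j. \<bar>subtree_mass X L par \<mu> j z - subtree_mass X L par \<nu> j z\<bar>) + B (j + 1)"
  unfolding Bterm_def sum.atLeast_Suc_atMost[OF assms(2)] Suc_eq_plus1
  by (simp add: sum_distrib_left distrib_left mult.assoc)

lemma level_coupling_bound:
  assumes "level_coupling j \<pi>" "1 \<le> j" "j \<le> L + 1"
  shows "transport_cost X d p \<pi> + 2 powr (p - 1) * h (j - 1) powr p * unmatched_mass X \<mu> \<nu> \<pi> \<le> B j"
  using assms(1) unfolding Bterm_split_first[OF assms(2,3)] unmatched_mass_level[OF assms(1,3), symmetric]
    level_coupling_def
  by (simp add: algebra_simps)

lemma level_coupling_leaves: "level_coupling (L + 1) (diagonal_coupling \<mu> \<nu>)"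
proof -
  have "{x\<in>X. anc L par (L + 1) x = z} = (if z \<in> X then {z} else {})" for z
    using anc_leaves by auto
  then have balanced: "blocks_balanced X (anc L par (L + 1)) \<mu> \<nu> (diagonal_coupling \<mu> \<nu>)"
    unfolding blocks_balanced_def block_sum_def row_residual_def col_residual_def
    using finite_X by (simp add: diagonal_coupling_row_sum diagonal_coupling_col_sum min_def)
  have "B (L + 1 + 1) = 0"
    unfolding Bterm_def by simp
  then show ?thesis
    unfolding level_coupling_def height_leaves
    using sub_coupling_diagonal[OF finite_X nonneg_\<mu> nonneg_\<nu>] balanced dist_self
    by (simp add: transport_cost_diagonal block_local_def diagonal_coupling_def)
qed

lemma level_coupling_descend:
  assumes "level_coupling (Suc j) \<pi>" "j \<le> L"
  shows "\<exists>\<pi>'. level_coupling j \<pi>'"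
proof -
  have "sub_coupling X \<mu> \<nu> \<pi>" "block_local X (anc L par j) \<pi>"
    using assms anc_parent[OF assms(2)] unfolding level_coupling_def block_local_def by metis+
  moreover have "\<forall>x\<in>X. \<forall>y\<in>X. anc L par j x = anc L par j y \<longrightarrow> d x y \<le> 2 * h j"
    using dist_same_anc assms(2) by simp
  ultimately obtain \<pi>' where \<pi>': "sub_coupling X \<mu> \<nu> \<pi>'" "block_local X (anc L par j) \<pi>'"
      "blocks_balanced X (anc L par j) \<mu> \<nu> \<pi>'"
    and cost: "transport_cost X d p \<pi>' + (2 * h j) powr p / 2 * unmatched_mass X \<mu> \<nu> \<pi>'
      \<le> transport_cost X d p \<pi> + (2 * h j) powr p / 2 * unmatched_mass X \<mu> \<nu> \<pi>"
    using block_matching_step[OF finite_X _ _ _ _ less_imp_le[OF p_pos]] dist_nonneg by blast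
  have "transport_cost X d p \<pi> + 2 powr (p - 1) * h j powr p * unmatched_mass X \<mu> \<nu> \<pi> \<le> B (j + 1)"
    using level_coupling_bound[OF assms(1)] assms(2) by simp
  then have "level_coupling j \<pi>'"
    using \<pi>' cost powr_double_half[OF height_nonneg, of j p] assms(2)
    unfolding level_coupling_def by simp
  then show ?thesis by blast
qed

lemma level_coupling_exists: "j \<le> L + 1 \<Longrightarrow> \<exists>\<pi>. level_coupling j \<pi>"
proof (induction rule: inc_induct)
  case base
  show ?case
    using level_coupling_leaves by blast
next
  case (step j)
  then show ?case
    using level_coupling_descend by auto
qed

lemma unmatched_mass_root:
  assumes "level_coupling 0 \<pi>"
  shows "unmatched_mass X \<mu> \<nu> \<pi> = \<bar>mass X \<mu> - mass X \<nu>\<bar>"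
proof -
  obtain r where r: "Q 0 = {r}"
    using root_singleton by blast
  then have "{y\<in>X. anc L par 0 y = r} = X"
    using anc_in_centres[of _ 0] by auto
  then show ?thesis
    unfolding unmatched_mass_level[OF assms, simplified] r subtree_mass_def mass_def by simp
qed

lemma KR_powr_le_level_coupling:
  assumes "level_coupling j \<pi>"
  shows "KR X d p C \<mu> \<nu> powr p \<le> transport_cost X d p \<pi> + C powr p / 2 * unmatched_mass X \<mu> \<nu> \<pi>"
  using assms p_pos KR_powr_le_KR_cost[of p X \<mu> \<nu> \<pi> d C]
  unfolding level_coupling_def KR_cost_eq by simp

lemma KR_powr_le_root_bound:
  "KR X d p C \<mu> \<nu> powr p \<le> (C powr p / 2 - 2 powr (p - 1) * h 0 powr p) * \<bar>mass X \<mu> - mass X \<nu>\<bar> + B 1"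
proof -
  obtain \<pi> where \<pi>: "level_coupling 0 \<pi>"
    using level_coupling_exists by blast
  then have "transport_cost X d p \<pi> + 2 powr (p - 1) * h 0 powr p * unmatched_mass X \<mu> \<nu> \<pi> \<le> B 1"
    unfolding level_coupling_def by simp
  then show ?thesis
    using KR_powr_le_level_coupling[OF \<pi>, of C] unfolding unmatched_mass_root[OF \<pi>] left_diff_distrib
    by linarith
qed

lemma KR_powr_le_B:
  assumes "1 \<le> l" "l \<le> L + 1" "0 \<le> C" "C \<le> 2 * h (l - 1)"
  shows "KR X d p C \<mu> \<nu> powr p \<le> B l"
proof -
  obtain \<pi> where \<pi>: "level_coupling l \<pi>"
    using level_coupling_exists assms(2) by blast
  have "C powr p / 2 \<le> (2 * h (l - 1)) powr p / 2"
    using assms(3,4) p_pos by (simp add: powr_mono2)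
  also have "\<dots> = 2 powr (p - 1) * h (l - 1) powr p"
    using assms(2) by (intro powr_double_half height_nonneg) auto
  finally have "C powr p / 2 * unmatched_mass X \<mu> \<nu> \<pi> \<le>
      2 powr (p - 1) * h (l - 1) powr p * unmatched_mass X \<mu> \<nu> \<pi>"
    using \<pi> unmatched_mass_nonneg unfolding level_coupling_def by (blast intro: mult_right_mono)
  then show ?thesis
    using KR_powr_le_level_coupling[OF \<pi>, of C] level_coupling_bound[OF \<pi> assms(1,2)] by linarith
qed

end

theorem lemma2p1:
  fixes X :: "'a set" and d :: "'a \<Rightarrow> 'a \<Rightarrow> real"
    and \<mu> \<nu> :: "'a \<Rightarrow> real" and p C q :: real and L :: nat
    and Q :: "nat \<Rightarrow> 'a set" and par :: "nat \<Rightarrow> 'a \<Rightarrow> 'a"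
  assumes "finite_metric X d" and "card X \<ge> 2"
    and "nonneg_measure X \<mu>" and "nonneg_measure X \<nu>"
    and "p \<ge> 1" and "C > 0" and "q > 1"
    and "valid_tree X d q L Q par"
  shows "(C \<ge> 2 * height X d q L 0 \<longrightarrow>
            KR X d p C \<mu> \<nu> powr p \<le>
              (C powr p / 2 - 2 powr (p - 1) * height X d q L 0 powr p)
                * \<bar>mass X \<mu> - mass X \<nu>\<bar>
              + Bterm X d q p L Q par \<mu> \<nu> 1)
       \<and> (\<forall>l\<in>{1..L}. 2 * height X d q L l \<le> C \<and> C < 2 * height X d q L (l - 1) \<longrightarrow>
            KR X d p C \<mu> \<nu> powr p \<le> Bterm X d q p L Q par \<mu> \<nu> l)
       \<and> (C \<le> max (2 * height X d q L L) (min_sep X d) \<longrightarrow>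
            KR X d p C \<mu> \<nu> powr p \<le> C powr p / 2 * TV X \<mu> \<nu>)"
\<comment> \<open>Only the upper bound on C in part (ii) is used: the other two bounds hold for every C.\<close>
proof -
  interpret tree_transport X d q L Q par \<mu> \<nu> p
    using assms by unfold_locales auto
  have "\<forall>l\<in>{1..L}. C < 2 * h (l - 1) \<longrightarrow> KR X d p C \<mu> \<nu> powr p \<le> B l"
    using assms(6) by (auto intro!: KR_powr_le_B)
  moreover have "KR X d p C \<mu> \<nu> powr p \<le> C powr p / 2 * TV X \<mu> \<nu>"
    using assms(3-5) finite_X dist_self by (intro KR_powr_le_TV) auto
  ultimately show ?thesis
    using KR_powr_le_root_bound by blast
qed

end
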